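(* Let $n\ge2$ and let $\varphi:\Delta_n^\circ\to\mathbb{R}$ be a regular exponentially concave function. The following are equivalent: (i) $L_\varphi$ is perturbation invariant: $L_\varphi(\mathbf{q}\oplus\mathbf{h}\,\|\,\mathbf{p}\oplus\mathbf{h})=L_\varphi(\mathbf{q}\,\|\,\mathbf{p})$ for all $\mathbf{p},\mathbf{q},\mathbf{h}\in\Delta_n^\circ$; (ii) there exist $\boldsymbol{\pi}\in\Delta_n^\circ$ and $c\in\mathbb{R}$ such that $\varphi(\mathbf{p})=-H^\times(\boldsymbol{\pi}\|\mathbf{p})+c=\sum_{i=1}^n\pi_i\log p_i+c$ for all $\mathbf{p}\in\Delta_n^\circ$.
   Context: $\Delta_n^\circ=\{\mathbf{x}\in(0,1]^n:\sum_ix_i=1\}$. Perturbation: $\mathbf{p}\oplus\mathbf{h}=(p_ih_i/\sum_jp_jh_j)_{i}$. Cross-entropy: $H^\times(\mathbf{p}\|\mathbf{q})=-\sum_ip_i\log q_i$. $\varphi$ is exponentially concave if $\Phi=e^\varphi$ is concave on $\Delta_n^\circ$; it is regular if moreover it is $C^4$ on $\Delta_n^\circ$ and $\frac{d^2}{dt^2}\big|_{t=0}\Phi(\mathbf{p}+t\mathbf{v})<0$ for every $\mathbf{p}\in\Delta_n^\circ$ and every nonzero $\mathbf{v}\in\mathbb{R}^n$ with $\sum_iv_i=0$. The logarithmic divergence is $L_\varphi(\mathbf{q}\|\mathbf{p})=\log\big(1+\nabla_{\mathbf{q}-\mathbf{p}}\varphi(\mathbf{p})\big)-(\varphi(\mathbf{q})-\varphi(\mathbf{p}))$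 for $\mathbf{p},\mathbf{q}\in\Delta_n^\circ$, where $\nabla_{\mathbf{v}}\varphi(\mathbf{p})=\frac{d}{dt}\varphi(\mathbf{p}+t\mathbf{v})|_{t=0}$. *)

theory Defs
  imports "HOL-Analysis.Analysis"
begin

definition open_simplex :: "(real^'n::finite) set" where
  "open_simplex = {x. (\<forall>i. 0 < x$i \<and> x$i \<le> 1) \<and> (\<Sum>i\<in>UNIV. x$i) = 1}"

definition perturb :: "real^'n::finite \<Rightarrow> real^'n \<Rightarrow> real^'n" where
  "perturb p h = (\<chi> i. p$i * h$i / (\<Sum>j\<in>UNIV. p$j * h$j))"

definition cross_entropy :: "real^'n::finite \<Rightarrow> real^'n \<Rightarrow> real" where
  "cross_entropy p q = - (\<Sum>i\<in>UNIV. p$i * ln (q$i))"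

definition dir_deriv :: "(real^'n::finite \<Rightarrow> real) \<Rightarrow> real^'n \<Rightarrow> real^'n \<Rightarrow> real" where
  "dir_deriv f v p = deriv (\<lambda>t. f (p + t *\<^sub>R v)) 0"

fun iter_dir_deriv :: "(real^'n::finite \<Rightarrow> real) \<Rightarrow> (real^'n) list \<Rightarrow> real^'n \<Rightarrow> real" where
  "iter_dir_deriv f [] p = f p"
| "iter_dir_deriv f (v # vs) p = dir_deriv (iter_dir_deriv f vs) v p"

definition tangent_dirs :: "(real^'n::finite) set" where
  "tangent_dirs = {v. (\<Sum>i\<in>UNIV. v$i) = 0}"

text \<open>C^k on the open simplex (a relatively open subset of the affine hyperplane
  sum x = 1): all iterated directional derivatives along tangent directions up to
  order k exist and are continuous on the open simplex (existence and continuity of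
  all partial derivatives up to order k in affine coordinates).\<close>
definition Ck_on_simplex :: "nat \<Rightarrow> (real^'n::finite \<Rightarrow> real) \<Rightarrow> bool" where
  "Ck_on_simplex k f \<longleftrightarrow>
     (\<forall>vs. set vs \<subseteq> tangent_dirs \<and> length vs \<le> k \<longrightarrow>
        continuous_on open_simplex (iter_dir_deriv f vs) \<and>
        (length vs < k \<longrightarrow> (\<forall>v\<in>tangent_dirs. \<forall>p\<in>open_simplex.
            (\<lambda>t. iter_dir_deriv f vs (p + t *\<^sub>R v)) differentiable (at 0))))"

definition exp_concave :: "(real^'n::finite \<Rightarrow> real) \<Rightarrow> bool" where
  "exp_concave \<phi> \<longleftrightarrow> concave_on open_simplex (\<lambda>x. exp (\<phi> x))"

definition regular_exp_concave :: "(real^'n::finite \<Rightarrow> real) \<Rightarrow> bool" where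
  "regular_exp_concave \<phi> \<longleftrightarrow> exp_concave \<phi> \<and> Ck_on_simplex 4 \<phi> \<and>
     (\<forall>p\<in>open_simplex. \<forall>v. v \<noteq> 0 \<and> (\<Sum>i\<in>UNIV. v$i) = 0 \<longrightarrow>
        deriv (deriv (\<lambda>t. exp (\<phi> (p + t *\<^sub>R v)))) 0 < 0)"

definition log_div :: "(real^'n::finite \<Rightarrow> real) \<Rightarrow> real^'n \<Rightarrow> real^'n \<Rightarrow> real" where
  "log_div \<phi> q p = ln (1 + dir_deriv \<phi> (q - p) p) - (\<phi> q - \<phi> p)"

end

theory Submission
  imports Defs
begin

text \<open>Write \<open>\<pi>(p)\<close> for the portfolio generated by \<open>\<phi>\<close>,
  \<open>\<pi>\<^sub>i(p) = p\<^sub>i (1 + \<nabla>\<^bsub>e\<^sub>i - p\<^esub>\<phi>(p))\<close>. Concavity of \<open>exp \<circ> \<phi>\<close> makes the directional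
  derivative linear, so \<open>1 + \<nabla>\<^bsub>q - p\<^esub>\<phi>(p) = \<Sum>\<^sub>i q\<^sub>i \<pi>\<^sub>i(p) / p\<^sub>i\<close> and \<open>L\<^sub>\<phi>\<close> is expressed
  through \<open>\<pi>\<close>. Extend \<open>\<phi>\<close> to the positive orthant by \<open>\<Phi>(x) = \<phi>(x / \<Sigma>x) + log \<Sigma>x\<close>.
  Perturbing by \<open>h \<propto> 1/p\<close> moves \<open>p\<close> to the barycentre \<open>c\<close>, so perturbation invariance
  says that \<open>\<Phi>(xy) - \<Phi>(x) - \<Phi>(y) + \<Phi>(1) = log (\<pi>(x) \<bullet> y) - log (\<pi>(c) \<bullet> y)\<close>.
  Symmetry in \<open>x, y\<close> makes \<open>y \<mapsto> \<pi>\<^sub>j(y) (\<pi>(c) \<bullet> y)\<close> linear, with a symmetric matrix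
  \<open>M\<close> whose rows sum to \<open>\<pi>(c)\<close>. On vectors that are constant on a set \<open>S\<close> and on its
  complement the cocycle identity forces \<open>\<Sigma>\<^bsub>S\<times>S\<^esub> M\<close> to be \<open>a\<^sub>S\<close> or \<open>a\<^sub>S\<^sup>2\<close>, where
  \<open>a\<^sub>S = \<Sigma>\<^bsub>i\<in>S\<^esub> \<pi>\<^sub>i(c)\<close>; the strict concavity in the regularity hypothesis, applied
  along a line through \<open>c\<close>, rules out the first alternative for proper \<open>S\<close>. Hence
  \<open>M = \<pi>(c) \<pi>(c)\<^sup>T\<close>, the portfolio is constant, and integrating along segments gives
  \<open>\<phi>(p) = \<Sigma>\<^sub>i \<pi>\<^sub>i(c) log p\<^sub>i + const\<close>. Conversely, for such \<open>\<phi>\<close> a perturbation multiplies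
  every ratio \<open>q\<^sub>i / p\<^sub>i\<close> by one common factor, which cancels in \<open>L\<^sub>\<phi>\<close>.\<close>

section \<open>The open simplex\<close>

lemma open_simplexI:
  fixes x :: "real^'n::finite"
  assumes "\<And>i. 0 < x$i" "(\<Sum>i\<in>UNIV. x$i) = 1"
  shows "x \<in> open_simplex"
proof -
  have "x$i \<le> 1" for i
  proof -
    have "x$i \<le> (\<Sum>j\<in>UNIV. x$j)"
      by (rule member_le_sum) (auto intro: less_imp_le assms(1))
    thus ?thesis using assms(2) by simp
  qed
  thus ?thesis using assms unfolding open_simplex_def by auto
qed

lemma open_simplex_pos: "x \<in> open_simplex \<Longrightarrow> 0 < x$i"
  unfolding open_simplex_def by auto

lemma open_simplex_sum: "x \<in> open_simplex \<Longrightarrow> (\<Sum>i\<in>UNIV. x$i) = 1"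
  unfolding open_simplex_def by auto

lemma convex_open_simplex: "convex (open_simplex :: (real^'n::finite) set)"
proof (rule convexI)
  fix x y :: "real^'n" and u v :: real
  assume x: "x \<in> open_simplex" and y: "y \<in> open_simplex"
    and uv: "0 \<le> u" "0 \<le> v" "u + v = 1"
  show "u *\<^sub>R x + v *\<^sub>R y \<in> open_simplex"
  proof (rule open_simplexI)
    fix i
    show "0 < (u *\<^sub>R x + v *\<^sub>R y) $ i"
      using open_simplex_pos[OF x, of i] open_simplex_pos[OF y, of i] uv
      by (cases "u = 0") (auto intro: add_pos_nonneg)
    show "(\<Sum>i\<in>UNIV. (u *\<^sub>R x + v *\<^sub>R y) $ i) = 1"
      using uv by (simp add: sum.distrib open_simplex_sum[OF x] open_simplex_sum[OF y]
          sum_distrib_left[symmetric])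
  qed
qed

lemma tangent_dirs_iff: "v \<in> tangent_dirs \<longleftrightarrow> (\<Sum>i\<in>UNIV. v$i) = 0"
  unfolding tangent_dirs_def by auto

lemma tangent_dirs_add: "v \<in> tangent_dirs \<Longrightarrow> w \<in> tangent_dirs \<Longrightarrow> v + w \<in> tangent_dirs"
  by (simp add: tangent_dirs_iff sum.distrib)

lemma tangent_dirs_scaleR: "v \<in> tangent_dirs \<Longrightarrow> c *\<^sub>R v \<in> tangent_dirs"
  by (simp add: tangent_dirs_iff sum_distrib_left[symmetric])

lemma tangent_dirs_zero: "0 \<in> tangent_dirs"
  by (simp add: tangent_dirs_iff)

lemma tangent_dirs_sum:
  "(\<And>i. i \<in> F \<Longrightarrow> u i \<in> tangent_dirs) \<Longrightarrow> (\<Sum>i\<in>F. u i) \<in> tangent_dirs"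
  by (induction F rule: infinite_finite_induct) (simp_all add: tangent_dirs_zero tangent_dirs_add)

lemma tangent_dirs_diff:
  "p \<in> open_simplex \<Longrightarrow> q \<in> open_simplex \<Longrightarrow> q - p \<in> tangent_dirs"
  by (simp add: tangent_dirs_iff sum_subtractf open_simplex_sum)

lemma tangent_dirs_axis_diff: "p \<in> open_simplex \<Longrightarrow> axis i 1 - p \<in> tangent_dirs"
  by (simp add: tangent_dirs_iff sum_subtractf open_simplex_sum axis_def)

lemma eventually_line_in_open_simplex:
  fixes p v :: "real^'n::finite"
  assumes p: "p \<in> open_simplex" and v: "v \<in> tangent_dirs"
  shows "eventually (\<lambda>t. p + t *\<^sub>R v \<in> open_simplex) (nhds 0)"
proof -
  have "eventually (\<lambda>t. 0 < p$i + t * v$i) (nhds 0)" for i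
  proof -
    have "((\<lambda>t. p$i + t * v$i) \<longlongrightarrow> p$i + 0 * v$i) (nhds 0)"
      by (intro tendsto_intros filterlim_ident)
    then show ?thesis
      using order_tendstoD(1) open_simplex_pos[OF p, of i] by fastforce
  qed
  then have "eventually (\<lambda>t. \<forall>i. 0 < p$i + t * v$i) (nhds 0)"
    by (rule eventually_all_finite)
  then show ?thesis
  proof (rule eventually_mono)
    fix t assume "\<forall>i. 0 < p$i + t * v$i"
    moreover have "(\<Sum>i\<in>UNIV. (p + t *\<^sub>R v)$i) = 1"
      using p v by (simp add: sum.distrib open_simplex_sum tangent_dirs_iff sum_distrib_left[symmetric])
    ultimately show "p + t *\<^sub>R v \<in> open_simplex"
      by (intro open_simplexI) auto
  qed
qed

lemma perturb_open_simplex: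
  assumes q: "q \<in> open_simplex" and h: "h \<in> open_simplex"
  shows "perturb q h \<in> open_simplex"
proof -
  have s: "(\<Sum>j\<in>UNIV. q$j * h$j) > 0"
    using open_simplex_pos[OF q] open_simplex_pos[OF h] by (simp add: sum_pos)
  show ?thesis
  proof (rule open_simplexI)
    fix i show "0 < perturb q h $ i"
      unfolding perturb_def using s open_simplex_pos[OF q, of i] open_simplex_pos[OF h, of i] by simp
  next
    show "(\<Sum>i\<in>UNIV. perturb q h $ i) = 1"
      unfolding perturb_def using s by (simp add: sum_divide_distrib[symmetric])
  qed
qed

lemma has_real_derivative_nonneg_if_nonneg_right:
  fixes f :: "real \<Rightarrow> real"
  assumes "(f has_real_derivative D) (at 0)" "f 0 = 0"
    and "\<exists>d>0. \<forall>t. 0 < t \<and> t < d \<longrightarrow> f t \<ge> 0"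
  shows "D \<ge> 0"
proof (rule ccontr)
  assume "\<not> D \<ge> 0"
  from DERIV_neg_dec_right[OF assms(1)] this obtain d1 where
    d1: "d1 > 0" "\<forall>h>0. h < d1 \<longrightarrow> f 0 > f (0 + h)" by fastforce
  from assms(3) obtain d where d: "d > 0" "\<forall>t. 0 < t \<and> t < d \<longrightarrow> f t \<ge> 0" by blast
  define t where "t = min d d1 / 2"
  have t: "0 < t" "t < d" "t < d1" using d d1 unfolding t_def by auto
  have "f t < 0" using d1(2) t assms(2) by auto
  moreover have "f t \<ge> 0" using d(2) t by blast
  ultimately show False by simp
qed

lemma ln_diff_eq_imp_cross_mult:
  fixes a b c d :: real
  assumes "0 < a" "0 < b" "0 < c" "0 < d" "ln a - ln b = ln c - ln d"
  shows "a * d = c * b"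
proof -
  have "ln (a * d) = ln (c * b)"
    using assms by (simp add: ln_mult)
  then show ?thesis
    using assms by simp
qed

lemma deriv2_of_logarithmic_derivative:
  fixes g R :: "real \<Rightarrow> real"
  assumes g: "eventually (\<lambda>t. (g has_real_derivative g t * R t) (at t)) (nhds 0)"
    and R: "(R has_real_derivative R') (at 0)"
  shows "deriv (deriv g) 0 = g 0 * (R 0 ^ 2 + R')"
proof -
  have "eventually (\<lambda>t. deriv g t = g t * R t) (nhds 0)"
    using g by (rule eventually_mono) (rule DERIV_imp_deriv)
  then have "deriv (deriv g) 0 = deriv (\<lambda>t. g t * R t) 0"
    by (rule deriv_cong_ev) simp
  also have "\<dots> = g 0 * (R 0 ^ 2 + R')"
    using DERIV_mult[OF eventually_nhds_x_imp_x[OF g] R]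
    by (intro DERIV_imp_deriv) (simp add: power2_eq_square algebra_simps)
  finally show ?thesis .
qed

lemma sum_if_mem:
  fixes a b :: real and S :: "'n::finite set"
  shows "(\<Sum>i\<in>UNIV. if i \<in> S then a else b) = real (card S) * a + (real CARD('n) - real (card S)) * b"
proof -
  have "card (- S) = CARD('n) - card S"
    unfolding Compl_eq_Diff_UNIV by (rule card_Diff_subset) simp_all
  then show ?thesis
    by (simp add: sum.If_cases Compl_eq_Diff_UNIV[symmetric] of_nat_diff card_mono)
qed

lemma block_rate_has_derivative:
  fixes n s \<alpha> A :: real
  assumes n: "0 < n"
  defines "M \<equiv> \<lambda>t. (\<alpha> * (1/n - t * s) + t * n * A) / ((1/n - t * s) + t * n * \<alpha>)"
  shows "((\<lambda>t. (n - s) * M t / (1/n + t * (n - s)) + (- s) * (1 - M t) / (1/n - t * s))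
    has_real_derivative n ^ 4 * (A - \<alpha>) - (n * (n * \<alpha> - s)) ^ 2) (at 0)"
  unfolding M_def using n
  apply -
  apply (rule derivative_eq_intros refl | simp)+
  apply (simp add: field_simps power2_eq_square eval_nat_numeral)
  done

lemma log_sum_has_derivative:
  fixes \<pi> q w :: "real^'n::finite"
  assumes "\<And>i. 0 < q$i + t * w$i"
  shows "((\<lambda>t. \<Sum>i\<in>UNIV. \<pi>$i * ln (q$i + t * w$i))
    has_real_derivative (\<Sum>i\<in>UNIV. \<pi>$i * (w$i / (q$i + t * w$i)))) (at t)"
proof (rule DERIV_sum)
  fix i
  have "((\<lambda>t. q$i + t * w$i) has_real_derivative w$i) (at t)"
    by (auto intro!: derivative_eq_intros)
  from DERIV_chain2[OF DERIV_ln_divide[OF assms[of i]] this]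
  have "((\<lambda>t. ln (q$i + t * w$i)) has_real_derivative 1 / (q$i + t * w$i) * w$i) (at t)" .
  then show "((\<lambda>t. \<pi>$i * ln (q$i + t * w$i)) has_real_derivative \<pi>$i * (w$i / (q$i + t * w$i))) (at t)"
    using DERIV_cmult by fastforce
qed

lemma sum_scaleR_axis_diff:
  fixes c p :: "real^'n::finite"
  shows "(\<Sum>i\<in>UNIV. c$i *\<^sub>R (axis i 1 - p)) = c - (\<Sum>i\<in>UNIV. c$i) *\<^sub>R p"
proof -
  have "(\<Sum>i\<in>UNIV. c$i *\<^sub>R axis i 1) = c"
    using basis_expansion[of c] by (simp add: scalar_mult_eq_scaleR)
  then show ?thesis
    by (simp add: scaleR_right_diff_distrib sum_subtractf scaleR_sum_left)
qed

section \<open>Directional derivatives of a regular exponentially concave function\<close>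

locale regular_exp_concave_fun =
  fixes \<phi> :: "real^'n::finite \<Rightarrow> real"
  assumes regular: "regular_exp_concave \<phi>"
begin

lemma exp_concave_on_open_simplex: "concave_on open_simplex (\<lambda>x. exp (\<phi> x))"
  using regular unfolding regular_exp_concave_def exp_concave_def by auto

lemma line_has_derivative:
  assumes p: "p \<in> open_simplex" and v: "v \<in> tangent_dirs" and pt: "p + t *\<^sub>R v \<in> open_simplex"
  shows "((\<lambda>s. \<phi> (p + s *\<^sub>R v)) has_real_derivative dir_deriv \<phi> v (p + t *\<^sub>R v)) (at t)"
proof -
  have "Ck_on_simplex 4 \<phi>"
    using regular unfolding regular_exp_concave_def by simp
  then have "\<forall>v\<in>tangent_dirs. \<forall>p\<in>open_simplex. (\<lambda>s. iter_dir_deriv \<phi> [] (p + s *\<^sub>R v)) differentiable (at 0)"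
    unfolding Ck_on_simplex_def by (drule_tac x="[]" in spec) simp
  then have "((\<lambda>s. \<phi> ((p + t *\<^sub>R v) + s *\<^sub>R v)) has_real_derivative dir_deriv \<phi> v (p + t *\<^sub>R v)) (at 0)"
    using v pt unfolding dir_deriv_def by (simp add: DERIV_deriv_iff_real_differentiable)
  moreover have "(\<lambda>s. \<phi> ((p + t *\<^sub>R v) + s *\<^sub>R v)) = (\<lambda>s. \<phi> (p + (s + t) *\<^sub>R v))"
    by (simp add: scaleR_add_left algebra_simps)
  ultimately show ?thesis using DERIV_shift[of "\<lambda>s. \<phi> (p + s *\<^sub>R v)" _ 0 t] by simp
qed

lemma line_has_derivative_0:
  "p \<in> open_simplex \<Longrightarrow> v \<in> tangent_dirs \<Longrightarrow>
    ((\<lambda>s. \<phi> (p + s *\<^sub>R v)) has_real_derivative dir_deriv \<phi> v p) (at 0)"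
  using line_has_derivative[of p v 0] by simp

lemma exp_line_has_derivative_0:
  "p \<in> open_simplex \<Longrightarrow> v \<in> tangent_dirs \<Longrightarrow>
    ((\<lambda>s. exp (\<phi> (p + s *\<^sub>R v))) has_real_derivative exp (\<phi> p) * dir_deriv \<phi> v p) (at 0)"
  using DERIV_chain2[OF DERIV_exp line_has_derivative_0] by simp

lemma dir_deriv_scaleR:
  assumes "p \<in> open_simplex" "v \<in> tangent_dirs"
  shows "dir_deriv \<phi> (c *\<^sub>R v) p = c * dir_deriv \<phi> v p"
proof -
  have "((\<lambda>s. \<phi> (p + (c * s) *\<^sub>R v)) has_real_derivative dir_deriv \<phi> v p * c) (at 0)"
    using DERIV_chain2[of "\<lambda>s. \<phi> (p + s *\<^sub>R v)", OF _ DERIV_cmult_Id[of c 0]]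
      line_has_derivative_0[OF assms] by simp
  then show ?thesis
    unfolding dir_deriv_def by (intro DERIV_imp_deriv) (simp add: mult.commute)
qed

lemma dir_deriv_superadditive:
  assumes p: "p \<in> open_simplex" and v: "v \<in> tangent_dirs" and w: "w \<in> tangent_dirs"
  shows "dir_deriv \<phi> v p + dir_deriv \<phi> w p \<le> dir_deriv \<phi> (v + w) p"
proof -
  have v2: "2 *\<^sub>R v \<in> tangent_dirs" and w2: "2 *\<^sub>R w \<in> tangent_dirs" and vw: "v + w \<in> tangent_dirs"
    using v w by (auto intro: tangent_dirs_scaleR tangent_dirs_add)
  have "eventually (\<lambda>t. p + t *\<^sub>R (2 *\<^sub>R v) \<in> open_simplex \<and> p + t *\<^sub>R (2 *\<^sub>R w) \<in> open_simplex) (nhds 0)"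
    using eventually_line_in_open_simplex[OF p v2] eventually_line_in_open_simplex[OF p w2]
    by (rule eventually_conj)
  then obtain d where d: "d > 0"
    "\<forall>t. dist t 0 < d \<longrightarrow> p + t *\<^sub>R (2 *\<^sub>R v) \<in> open_simplex \<and> p + t *\<^sub>R (2 *\<^sub>R w) \<in> open_simplex"
    unfolding eventually_nhds_metric by blast
  define f where "f t = exp (\<phi> (p + t *\<^sub>R (v + w)))
      - (1/2) * exp (\<phi> (p + t *\<^sub>R (2 *\<^sub>R v))) - (1/2) * exp (\<phi> (p + t *\<^sub>R (2 *\<^sub>R w)))" for t
  have fd: "(f has_real_derivative exp (\<phi> p) * dir_deriv \<phi> (v + w) p
      - (1/2) * (exp (\<phi> p) * dir_deriv \<phi> (2 *\<^sub>R v) p) - (1/2) * (exp (\<phi> p) * dir_deriv \<phi> (2 *\<^sub>R w) p)) (at 0)"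
    unfolding f_def
    by (rule DERIV_diff[OF DERIV_diff[OF exp_line_has_derivative_0[OF p vw]
          DERIV_cmult[OF exp_line_has_derivative_0[OF p v2]]] DERIV_cmult[OF exp_line_has_derivative_0[OF p w2]]])
  have f_nonneg: "\<exists>d>0. \<forall>t. 0 < t \<and> t < d \<longrightarrow> f t \<ge> 0"
  proof (intro exI[of _ d] conjI allI impI)
    fix t assume "0 < t \<and> t < d"
    then have A: "p + t *\<^sub>R (2 *\<^sub>R v) \<in> open_simplex" and B: "p + t *\<^sub>R (2 *\<^sub>R w) \<in> open_simplex"
      using d(2) by auto
    have "p + t *\<^sub>R (v + w) = (1/2) *\<^sub>R (p + t *\<^sub>R (2 *\<^sub>R v)) + (1/2) *\<^sub>R (p + t *\<^sub>R (2 *\<^sub>R w))"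
      by (simp add: vec_eq_iff algebra_simps)
    then show "f t \<ge> 0"
      using concave_onD[OF exp_concave_on_open_simplex, of "1/2", OF _ _ A B] unfolding f_def by simp
  qed (fact d)
  have "0 \<le> exp (\<phi> p) * dir_deriv \<phi> (v + w) p
      - (1/2) * (exp (\<phi> p) * dir_deriv \<phi> (2 *\<^sub>R v) p) - (1/2) * (exp (\<phi> p) * dir_deriv \<phi> (2 *\<^sub>R w) p)"
    by (rule has_real_derivative_nonneg_if_nonneg_right[OF fd _ f_nonneg]) (simp add: f_def)
  then have "0 \<le> exp (\<phi> p) * (dir_deriv \<phi> (v + w) p - dir_deriv \<phi> v p - dir_deriv \<phi> w p)"
    by (simp add: dir_deriv_scaleR p v w right_diff_distrib)
  then show ?thesis by (simp add: zero_le_mult_iff)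
qed

lemma dir_deriv_uminus:
  "p \<in> open_simplex \<Longrightarrow> v \<in> tangent_dirs \<Longrightarrow> dir_deriv \<phi> (- v) p = - dir_deriv \<phi> v p"
  using dir_deriv_scaleR[of p v "-1"] by simp

lemma dir_deriv_add:
  assumes p: "p \<in> open_simplex" and v: "v \<in> tangent_dirs" and w: "w \<in> tangent_dirs"
  shows "dir_deriv \<phi> (v + w) p = dir_deriv \<phi> v p + dir_deriv \<phi> w p"
proof -
  have "- v \<in> tangent_dirs" "- w \<in> tangent_dirs"
    using tangent_dirs_scaleR[OF v, of "-1"] tangent_dirs_scaleR[OF w, of "-1"] by simp_all
  from dir_deriv_superadditive[OF p this]
  have "dir_deriv \<phi> (v + w) p \<le> dir_deriv \<phi> v p + dir_deriv \<phi> w p"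
    unfolding minus_add_distrib[symmetric] dir_deriv_uminus[OF p tangent_dirs_add[OF v w]]
      dir_deriv_uminus[OF p v] dir_deriv_uminus[OF p w] by simp
  then show ?thesis using dir_deriv_superadditive[OF p v w] by linarith
qed

lemma dir_deriv_sum:
  assumes p: "p \<in> open_simplex" and u: "\<And>i. i \<in> F \<Longrightarrow> u i \<in> tangent_dirs"
  shows "dir_deriv \<phi> (\<Sum>i\<in>F. c i *\<^sub>R u i) p = (\<Sum>i\<in>F. c i * dir_deriv \<phi> (u i) p)"
  using u
proof (induction F rule: infinite_finite_induct)
  case (insert x F)
  then show ?case
    by (simp add: dir_deriv_add[OF p] dir_deriv_scaleR[OF p] tangent_dirs_scaleR tangent_dirs_sum)
qed (use dir_deriv_scaleR[OF p tangent_dirs_zero, of 0] in simp_all)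

definition weight :: "real^'n \<Rightarrow> 'n \<Rightarrow> real" where
  "weight p i = 1 + dir_deriv \<phi> (axis i 1 - p) p"

lemma dir_deriv_weight_sum:
  assumes p: "p \<in> open_simplex"
  shows "dir_deriv \<phi> (c - (\<Sum>i\<in>UNIV. c$i) *\<^sub>R p) p
    = (\<Sum>i\<in>UNIV. c$i * weight p i) - (\<Sum>i\<in>UNIV. c$i)"
proof -
  have "dir_deriv \<phi> (c - (\<Sum>i\<in>UNIV. c$i) *\<^sub>R p) p = (\<Sum>i\<in>UNIV. c$i * dir_deriv \<phi> (axis i 1 - p) p)"
    unfolding sum_scaleR_axis_diff[symmetric] using tangent_dirs_axis_diff[OF p]
    by (intro dir_deriv_sum[OF p])
  then show ?thesis by (simp add: weight_def algebra_simps sum_subtractf sum.distrib)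
qed

lemma dir_deriv_eq_weights:
  assumes "p \<in> open_simplex" "v \<in> tangent_dirs"
  shows "dir_deriv \<phi> v p = (\<Sum>i\<in>UNIV. v$i * weight p i)"
  using dir_deriv_weight_sum[OF assms(1), of v] assms(2) by (simp add: tangent_dirs_iff)

lemma sum_mult_weight_eq_1:
  assumes p: "p \<in> open_simplex"
  shows "(\<Sum>i\<in>UNIV. p$i * weight p i) = 1"
  using dir_deriv_weight_sum[OF p, of p] dir_deriv_scaleR[OF p tangent_dirs_zero, of 0]
  by (simp add: open_simplex_sum[OF p])

lemma one_plus_dir_deriv_eq_weights:
  assumes p: "p \<in> open_simplex" and q: "q \<in> open_simplex"
  shows "1 + dir_deriv \<phi> (q - p) p = (\<Sum>i\<in>UNIV. q$i * weight p i)"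
  using dir_deriv_eq_weights[OF p tangent_dirs_diff[OF p q]] sum_mult_weight_eq_1[OF p]
  by (simp add: algebra_simps sum_subtractf)

lemma exp_le_tangent_line:
  assumes p: "p \<in> open_simplex" and q: "q \<in> open_simplex"
  shows "exp (\<phi> q) \<le> exp (\<phi> p) * (1 + dir_deriv \<phi> (q - p) p)"
proof -
  define f where "f t = exp (\<phi> (p + t *\<^sub>R (q - p))) - exp (\<phi> p) - t * (exp (\<phi> q) - exp (\<phi> p))" for t
  have "(f has_real_derivative exp (\<phi> p) * dir_deriv \<phi> (q - p) p - 0 - 1 * (exp (\<phi> q) - exp (\<phi> p))) (at 0)"
    unfolding f_def
    by (intro DERIV_diff exp_line_has_derivative_0 p tangent_dirs_diff q DERIV_const)
      (auto intro!: derivative_eq_intros)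
  moreover have "\<exists>d>0. \<forall>t. 0 < t \<and> t < d \<longrightarrow> f t \<ge> 0"
  proof (intro exI[of _ 1] conjI allI impI)
    fix t :: real assume t: "0 < t \<and> t < 1"
    have "(1 - t) *\<^sub>R p + t *\<^sub>R q = p + t *\<^sub>R (q - p)" by (simp add: algebra_simps)
    then show "f t \<ge> 0"
      using concave_onD[OF exp_concave_on_open_simplex, of t p q] t p q
      unfolding f_def by (simp add: algebra_simps)
  qed simp
  ultimately have "0 \<le> exp (\<phi> p) * dir_deriv \<phi> (q - p) p - (exp (\<phi> q) - exp (\<phi> p))"
    by (intro has_real_derivative_nonneg_if_nonneg_right[of f]) (simp_all add: f_def)
  then show ?thesis by (simp add: algebra_simps)
qed

lemma sum_mult_weight_pos:
  assumes p: "p \<in> open_simplex" and q: "q \<in> open_simplex"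
  shows "(\<Sum>i\<in>UNIV. q$i * weight p i) > 0"
proof -
  have "0 < exp (\<phi> p) * (1 + dir_deriv \<phi> (q - p) p)"
    using exp_le_tangent_line[OF p q] exp_gt_zero[of "\<phi> q"] by linarith
  then show ?thesis
    by (simp add: zero_less_mult_iff one_plus_dir_deriv_eq_weights[OF p q, symmetric])
qed

lemma log_div_eq_weights:
  assumes "p \<in> open_simplex" "q \<in> open_simplex"
  shows "log_div \<phi> q p = ln (\<Sum>i\<in>UNIV. q$i * weight p i) - \<phi> q + \<phi> p"
  unfolding log_div_def using one_plus_dir_deriv_eq_weights[OF assms] by simp

end

section \<open>The portfolio map and the extension to the positive orthant\<close>

definition positive_vec :: "real^'n::finite \<Rightarrow> bool" where
  "positive_vec x \<longleftrightarrow> (\<forall>i. 0 < x$i)"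

definition coord_sum :: "real^'n::finite \<Rightarrow> real" where
  "coord_sum x = (\<Sum>i\<in>UNIV. x$i)"

definition normalize_vec :: "real^'n::finite \<Rightarrow> real^'n" where
  "normalize_vec x = (\<chi> i. x$i / coord_sum x)"

definition simplex_center :: "real^'n::finite" where
  "simplex_center = (\<chi> i. 1 / real CARD('n))"

lemma positive_vec_one: "positive_vec 1"
  unfolding positive_vec_def by simp

lemma positive_vec_mult: "positive_vec x \<Longrightarrow> positive_vec y \<Longrightarrow> positive_vec (x * y)"
  unfolding positive_vec_def by simp

lemma positive_vec_inverse: "positive_vec x \<Longrightarrow> positive_vec (\<chi> i. 1 / x$i)"
  unfolding positive_vec_def by simp

lemma open_simplex_positive_vec: "p \<in> open_simplex \<Longrightarrow> positive_vec p"
  unfolding positive_vec_def using open_simplex_pos by blast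

lemma coord_sum_pos: "positive_vec x \<Longrightarrow> 0 < coord_sum x"
  unfolding positive_vec_def coord_sum_def by (simp add: sum_pos)

lemma coord_sum_one: "coord_sum (1 :: real^'n::finite) = real CARD('n)"
  unfolding coord_sum_def by simp

lemma normalize_vec_in_open_simplex:
  assumes "positive_vec x"
  shows "normalize_vec x \<in> open_simplex"
proof (rule open_simplexI)
  show "0 < normalize_vec x $ i" for i
    using assms coord_sum_pos[OF assms] unfolding positive_vec_def normalize_vec_def by simp
  show "(\<Sum>i\<in>UNIV. normalize_vec x $ i) = 1"
    using coord_sum_pos[OF assms] unfolding normalize_vec_def
    by (simp add: sum_divide_distrib[symmetric] coord_sum_def[symmetric])
qed

lemma normalize_vec_open_simplex: "p \<in> open_simplex \<Longrightarrow> normalize_vec p = p"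
  unfolding normalize_vec_def coord_sum_def by (simp add: open_simplex_sum vec_eq_iff)

lemma normalize_vec_one: "normalize_vec 1 = simplex_center"
  unfolding normalize_vec_def simplex_center_def coord_sum_one by simp

lemma simplex_center_in_open_simplex: "simplex_center \<in> open_simplex"
  using normalize_vec_in_open_simplex[OF positive_vec_one] by (simp add: normalize_vec_one)

lemma normalize_vec_mult_left:
  assumes "positive_vec x"
  shows "normalize_vec (normalize_vec x * y) = normalize_vec (x * y)"
  using coord_sum_pos[OF assms]
  by (simp add: normalize_vec_def coord_sum_def vec_eq_iff sum_divide_distrib[symmetric])

lemma coord_sum_normalize_vec_mult:
  assumes "positive_vec x"
  shows "coord_sum (normalize_vec x * y) = coord_sum (x * y) / coord_sum x"
  unfolding normalize_vec_def coord_sum_def by (simp add: sum_divide_distrib)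

lemma perturb_eq_normalize_vec: "perturb p h = normalize_vec (p * h)"
  unfolding perturb_def normalize_vec_def coord_sum_def by simp

context regular_exp_concave_fun
begin

definition portfolio :: "real^'n \<Rightarrow> real^'n" where
  "portfolio p = (\<chi> i. p$i * weight p i)"

lemma dir_deriv_eq_portfolio:
  assumes "p \<in> open_simplex" "v \<in> tangent_dirs"
  shows "dir_deriv \<phi> v p = (\<Sum>i\<in>UNIV. v$i / p$i * portfolio p $ i)"
  unfolding dir_deriv_eq_weights[OF assms] portfolio_def
  using open_simplex_pos[OF assms(1)] by (intro sum.cong) (simp_all add: less_imp_neq[symmetric])

lemma phi_minus_log_sum_const:
  assumes portfolio_const: "\<And>r. r \<in> open_simplex \<Longrightarrow> portfolio r = \<pi>"
    and p: "p \<in> open_simplex" and q: "q \<in> open_simplex"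
  shows "\<phi> p - (\<Sum>i\<in>UNIV. \<pi>$i * ln (p$i)) = \<phi> q - (\<Sum>i\<in>UNIV. \<pi>$i * ln (q$i))"
proof -
  define w where "w = p - q"
  have w: "w \<in> tangent_dirs" unfolding w_def by (rule tangent_dirs_diff[OF q p])
  have seg: "q + t *\<^sub>R w \<in> open_simplex" if "0 \<le> t" "t \<le> 1" for t
  proof -
    have "q + t *\<^sub>R w = (1 - t) *\<^sub>R q + t *\<^sub>R p" unfolding w_def by (simp add: algebra_simps)
    then show ?thesis
      using convexD[OF convex_open_simplex q p, of "1 - t" t] that by simp
  qed
  define f where "f t = \<phi> (q + t *\<^sub>R w) - (\<Sum>i\<in>UNIV. \<pi>$i * ln (q$i + t * w$i))" for t
  have f_deriv: "(f has_real_derivative 0) (at t)" if "0 \<le> t" "t \<le> 1" for t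
  proof -
    have qt: "q + t *\<^sub>R w \<in> open_simplex" by (rule seg[OF that])
    have pos: "0 < q$i + t * w$i" for i using open_simplex_pos[OF qt, of i] by simp
    have "dir_deriv \<phi> w (q + t *\<^sub>R w) = (\<Sum>i\<in>UNIV. \<pi>$i * (w$i / (q$i + t * w$i)))"
      unfolding dir_deriv_eq_portfolio[OF qt w] portfolio_const[OF qt] by (simp add: algebra_simps)
    then show ?thesis
      using DERIV_diff[OF line_has_derivative[OF q w qt] log_sum_has_derivative[where \<pi>=\<pi>, OF pos]]
      unfolding f_def by simp
  qed
  have "f 1 = f 0"
    by (rule DERIV_isconst2[of 0 1])
      (auto intro!: DERIV_isCont continuous_at_imp_continuous_on f_deriv)
  then show ?thesis unfolding f_def w_def by simp
qed

definition cone_ext :: "real^'n \<Rightarrow> real" where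
  "cone_ext x = \<phi> (normalize_vec x) + ln (coord_sum x)"

definition cone_portfolio :: "real^'n \<Rightarrow> real^'n" where
  "cone_portfolio x = portfolio (normalize_vec x)"

lemma sum_portfolio: "p \<in> open_simplex \<Longrightarrow> (\<Sum>i\<in>UNIV. portfolio p $ i) = 1"
  unfolding portfolio_def using sum_mult_weight_eq_1 by simp

lemma sum_cone_portfolio: "positive_vec x \<Longrightarrow> (\<Sum>i\<in>UNIV. cone_portfolio x $ i) = 1"
  unfolding cone_portfolio_def by (simp add: sum_portfolio normalize_vec_in_open_simplex)

abbreviation center_portfolio :: "real^'n" where
  "center_portfolio \<equiv> cone_portfolio 1"

lemma sum_center_portfolio: "(\<Sum>i\<in>UNIV. center_portfolio $ i) = 1"
  by (rule sum_cone_portfolio[OF positive_vec_one])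

lemma sum_portfolio_mult:
  assumes p: "p \<in> open_simplex" and X: "positive_vec X"
  shows "(\<Sum>i\<in>UNIV. portfolio p $ i * X$i)
    = coord_sum (p * X) * (\<Sum>i\<in>UNIV. normalize_vec (p * X) $ i * weight p i)"
  using coord_sum_pos[OF positive_vec_mult[OF open_simplex_positive_vec[OF p] X]]
  by (simp add: portfolio_def normalize_vec_def sum_distrib_left algebra_simps)

lemma ln_sum_cone_portfolio_mult:
  assumes P: "positive_vec P" and X: "positive_vec X"
  shows "0 < (\<Sum>i\<in>UNIV. cone_portfolio P $ i * X$i)"
    and "ln (\<Sum>i\<in>UNIV. cone_portfolio P $ i * X$i)
      = cone_ext (P * X) - cone_ext P + log_div \<phi> (normalize_vec (P * X)) (normalize_vec P)"
proof -
  define p where "p = normalize_vec P"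
  define q where "q = normalize_vec (P * X)"
  have p: "p \<in> open_simplex" and q: "q \<in> open_simplex"
    unfolding p_def q_def using P X by (simp_all add: normalize_vec_in_open_simplex positive_vec_mult)
  have PX: "0 < coord_sum (P * X)" "0 < coord_sum P"
    using P X by (simp_all add: coord_sum_pos positive_vec_mult)
  have sum_eq: "(\<Sum>i\<in>UNIV. cone_portfolio P $ i * X$i)
      = coord_sum (P * X) / coord_sum P * (\<Sum>i\<in>UNIV. q$i * weight p i)"
    using sum_portfolio_mult[OF p X]
    unfolding cone_portfolio_def p_def q_def normalize_vec_mult_left[OF P]
      coord_sum_normalize_vec_mult[OF P] .
  then show "0 < (\<Sum>i\<in>UNIV. cone_portfolio P $ i * X$i)"
    using PX sum_mult_weight_pos[OF p q] by simp
  show "ln (\<Sum>i\<in>UNIV. cone_portfolio P $ i * X$i)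
      = cone_ext (P * X) - cone_ext P + log_div \<phi> q p"
    unfolding sum_eq log_div_eq_weights[OF p q] cone_ext_def p_def[symmetric] q_def[symmetric]
    using PX sum_mult_weight_pos[OF p q] by (simp add: ln_mult ln_div)
qed

end

definition block_vec :: "'n::finite set \<Rightarrow> real \<Rightarrow> real^'n" where
  "block_vec S X = (\<chi> k. if k \<in> S then X else 1)"

lemma positive_vec_block_vec: "0 < X \<Longrightarrow> positive_vec (block_vec S X)"
  unfolding positive_vec_def block_vec_def by simp

lemma block_vec_mult: "block_vec S X * block_vec S Y = block_vec S (X * Y)"
  unfolding block_vec_def by (simp add: vec_eq_iff)

lemma sum_mult_block_vec:
  "(\<Sum>i\<in>UNIV. f i * block_vec S X $ i) = (\<Sum>i\<in>UNIV. f i) + (X - 1) * (\<Sum>i\<in>S. f i)"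
proof -
  have "(\<Sum>i\<in>UNIV. f i * block_vec S X $ i) = (\<Sum>i\<in>UNIV. f i + (X - 1) * (if i \<in> S then f i else 0))"
    unfolding block_vec_def by (rule sum.cong) (auto simp: algebra_simps)
  also have "\<dots> = (\<Sum>i\<in>UNIV. f i) + (X - 1) * (\<Sum>i\<in>S. f i)"
    by (simp add: sum.distrib sum_distrib_left[symmetric] sum.If_cases)
  finally show ?thesis .
qed

section \<open>Consequences of perturbation invariance\<close>

locale perturbation_invariant = regular_exp_concave_fun \<phi> for \<phi> :: "real^'n::finite \<Rightarrow> real" +
  assumes perturb_invariant: "\<forall>p\<in>open_simplex. \<forall>q\<in>open_simplex. \<forall>h\<in>open_simplex.
    log_div \<phi> (perturb q h) (perturb p h) = log_div \<phi> q p"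
begin

lemma log_div_transport_to_center:
  assumes p: "p \<in> open_simplex" and X: "positive_vec X"
  shows "log_div \<phi> (normalize_vec (p * X)) p = log_div \<phi> (normalize_vec X) simplex_center"
proof -
  have P: "positive_vec p" by (rule open_simplex_positive_vec[OF p])
  define I where "I = (\<chi> i. 1 / p$i)"
  define h where "h = normalize_vec I"
  have I: "positive_vec I" unfolding I_def by (rule positive_vec_inverse[OF P])
  have h: "h \<in> open_simplex"
    unfolding h_def by (rule normalize_vec_in_open_simplex[OF I])
  have inv_mult: "I * (p * Y) = Y" for Y
  proof -
    have "p$i \<noteq> 0" for i
      using open_simplex_pos[OF p, of i] by simp
    then show ?thesis by (simp add: I_def vec_eq_iff)
  qed
  have "perturb p h = normalize_vec (I * (p * 1))"
    unfolding perturb_eq_normalize_vec h_def mult.commute[of p]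
    by (simp add: normalize_vec_mult_left[OF I])
  also have "\<dots> = simplex_center"
    by (simp only: inv_mult normalize_vec_one)
  finally have "perturb p h = simplex_center" .
  moreover have "perturb (normalize_vec (p * X)) h = normalize_vec (I * (p * X))"
    unfolding perturb_eq_normalize_vec h_def
    by (simp only: normalize_vec_mult_left positive_vec_mult P X mult.commute[of "p * X"]
        normalize_vec_mult_left[OF I])
  ultimately have "perturb p h = simplex_center" "perturb (normalize_vec (p * X)) h = normalize_vec X"
    by (simp_all only: inv_mult)
  then show ?thesis
    using perturb_invariant p h normalize_vec_in_open_simplex[OF positive_vec_mult[OF P X]]
    by metis
qed

lemma cone_ext_cocycle:
  assumes P: "positive_vec P" and X: "positive_vec X"
  shows "cone_ext (P * X) - cone_ext P - cone_ext X + cone_ext 1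
    = ln (\<Sum>i\<in>UNIV. cone_portfolio P $ i * X$i) - ln (\<Sum>i\<in>UNIV. center_portfolio $ i * X$i)"
  using ln_sum_cone_portfolio_mult(2)[OF P X] ln_sum_cone_portfolio_mult(2)[OF positive_vec_one X]
    log_div_transport_to_center[OF normalize_vec_in_open_simplex[OF P] X]
  by (simp add: normalize_vec_mult_left[OF P] normalize_vec_one)

lemma cone_portfolio_exchange:
  assumes P: "positive_vec P" and X: "positive_vec X"
  shows "(\<Sum>i\<in>UNIV. cone_portfolio P $ i * X$i) * (\<Sum>i\<in>UNIV. center_portfolio $ i * P$i)
       = (\<Sum>i\<in>UNIV. cone_portfolio X $ i * P$i) * (\<Sum>i\<in>UNIV. center_portfolio $ i * X$i)"
proof -
  note pos = ln_sum_cone_portfolio_mult(1)[OF P X] ln_sum_cone_portfolio_mult(1)[OF positive_vec_one X]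
    ln_sum_cone_portfolio_mult(1)[OF X P] ln_sum_cone_portfolio_mult(1)[OF positive_vec_one P]
  have "ln (\<Sum>i\<in>UNIV. cone_portfolio P $ i * X$i) - ln (\<Sum>i\<in>UNIV. center_portfolio $ i * X$i)
      = ln (\<Sum>i\<in>UNIV. cone_portfolio X $ i * P$i) - ln (\<Sum>i\<in>UNIV. center_portfolio $ i * P$i)"
    using cone_ext_cocycle[OF P X] cone_ext_cocycle[OF X P] by (simp add: mult.commute)
  with pos show ?thesis
    by (rule ln_diff_eq_imp_cross_mult)
qed

text \<open>\<open>portfolio_matrix\<close> is the matrix of the linear map
  \<open>X \<mapsto> cone_portfolio X $ j * (center_portfolio \<bullet> X)\<close>, read off at the test vectors
  \<open>block_vec {j} 2\<close>.\<close>

definition portfolio_matrix :: "'n \<Rightarrow> 'n \<Rightarrow> real" where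
  "portfolio_matrix j k
    = (1 + center_portfolio $ j) * cone_portfolio (block_vec {j} 2) $ k - center_portfolio $ k"

lemma cone_portfolio_matrix_rep:
  assumes X: "positive_vec X"
  shows "cone_portfolio X $ j * (\<Sum>i\<in>UNIV. center_portfolio $ i * X$i)
    = (\<Sum>k\<in>UNIV. portfolio_matrix j k * X$k)"
proof -
  have E: "positive_vec (block_vec {j} 2)" by (simp add: positive_vec_block_vec)
  have "(\<Sum>i\<in>UNIV. cone_portfolio (block_vec {j} 2) $ i * X$i) * (1 + center_portfolio $ j)
       = (1 + cone_portfolio X $ j) * (\<Sum>i\<in>UNIV. center_portfolio $ i * X$i)"
    using cone_portfolio_exchange[OF E X]
    by (simp add: sum_mult_block_vec sum_center_portfolio sum_cone_portfolio[OF X])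
  then have "cone_portfolio X $ j * (\<Sum>i\<in>UNIV. center_portfolio $ i * X$i)
      = (1 + center_portfolio $ j) * (\<Sum>i\<in>UNIV. cone_portfolio (block_vec {j} 2) $ i * X$i)
        - (\<Sum>i\<in>UNIV. center_portfolio $ i * X$i)"
    by (simp add: algebra_simps)
  also have "\<dots> = (\<Sum>k\<in>UNIV. portfolio_matrix j k * X$k)"
    unfolding portfolio_matrix_def by (simp add: sum_distrib_left sum_subtractf algebra_simps)
  finally show ?thesis .
qed

lemma portfolio_matrix_row_sum: "(\<Sum>k\<in>UNIV. portfolio_matrix j k) = center_portfolio $ j"
  unfolding portfolio_matrix_def
  using sum_cone_portfolio[OF positive_vec_block_vec, of 2 "{j}"] sum_center_portfolio
  by (simp add: sum_subtractf sum_distrib_left[symmetric])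

lemma portfolio_matrix_sym: "portfolio_matrix j k = portfolio_matrix k j"
proof -
  have "(1 + cone_portfolio (block_vec {k} 2) $ j) * (1 + center_portfolio $ k)
      = (1 + cone_portfolio (block_vec {j} 2) $ k) * (1 + center_portfolio $ j)"
    using cone_portfolio_exchange[OF positive_vec_block_vec[of 2 "{k}"] positive_vec_block_vec[of 2 "{j}"]]
    by (simp add: sum_mult_block_vec sum_center_portfolio sum_cone_portfolio positive_vec_block_vec)
  then show ?thesis
    unfolding portfolio_matrix_def by (simp add: algebra_simps)
qed

definition center_mass :: "'n set \<Rightarrow> real" where
  "center_mass S = (\<Sum>i\<in>S. center_portfolio $ i)"

definition matrix_mass :: "'n set \<Rightarrow> real" where
  "matrix_mass S = (\<Sum>j\<in>S. \<Sum>k\<in>S. portfolio_matrix j k)"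

lemma sum_center_portfolio_block_vec:
  "(\<Sum>i\<in>UNIV. center_portfolio $ i * block_vec S X $ i) = 1 + (X - 1) * center_mass S"
  by (simp add: sum_mult_block_vec sum_center_portfolio center_mass_def)

lemma block_portfolio_mass:
  assumes X: "0 < X"
  shows "(\<Sum>j\<in>S. cone_portfolio (block_vec S X) $ j) * (1 + (X - 1) * center_mass S)
    = center_mass S + (X - 1) * matrix_mass S"
proof -
  have "(\<Sum>j\<in>S. cone_portfolio (block_vec S X) $ j) * (1 + (X - 1) * center_mass S)
      = (\<Sum>j\<in>S. \<Sum>k\<in>UNIV. portfolio_matrix j k * block_vec S X $ k)"
    unfolding sum_center_portfolio_block_vec[symmetric] sum_distrib_right
    by (simp add: cone_portfolio_matrix_rep[OF positive_vec_block_vec[OF X]])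
  also have "\<dots> = center_mass S + (X - 1) * matrix_mass S"
    unfolding sum_mult_block_vec portfolio_matrix_row_sum center_mass_def matrix_mass_def
    by (simp add: sum.distrib sum_distrib_left)
  finally show ?thesis .
qed

lemma block_cocycle:
  fixes S :: "'n set" and X Y :: real
  assumes X: "0 < X" and Y: "0 < Y"
  shows "0 < 1 + (X - 1) * center_mass S"
    and "0 < 1 + (X - 1) * center_mass S + (Y - 1) * (center_mass S + (X - 1) * matrix_mass S)"
    and "cone_ext (block_vec S (X * Y)) - cone_ext (block_vec S X) - cone_ext (block_vec S Y)
      + cone_ext 1
      = ln (1 + (X - 1) * center_mass S + (Y - 1) * (center_mass S + (X - 1) * matrix_mass S))
        - ln (1 + (X - 1) * center_mass S) - ln (1 + (Y - 1) * center_mass S)"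
proof -
  have D_pos: "0 < 1 + (Z - 1) * center_mass S" if "0 < Z" for Z
    using ln_sum_cone_portfolio_mult(1)[OF positive_vec_one positive_vec_block_vec[OF that]]
    unfolding sum_center_portfolio_block_vec by simp
  define B where "B = (\<Sum>i\<in>UNIV. cone_portfolio (block_vec S X) $ i * block_vec S Y $ i)"
  have "(1 + (X - 1) * center_mass S) * B
      = (1 + (X - 1) * center_mass S)
        + (Y - 1) * ((\<Sum>j\<in>S. cone_portfolio (block_vec S X) $ j) * (1 + (X - 1) * center_mass S))"
    unfolding B_def sum_mult_block_vec sum_cone_portfolio[OF positive_vec_block_vec[OF X]]
    by (simp add: algebra_simps)
  then have NB: "1 + (X - 1) * center_mass S + (Y - 1) * (center_mass S + (X - 1) * matrix_mass S)
      = (1 + (X - 1) * center_mass S) * B"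
    unfolding block_portfolio_mass[OF X] by simp
  have B_pos: "0 < B"
    unfolding B_def by (intro ln_sum_cone_portfolio_mult(1) positive_vec_block_vec X Y)
  show "0 < 1 + (X - 1) * center_mass S" by (rule D_pos[OF X])
  then show "0 < 1 + (X - 1) * center_mass S + (Y - 1) * (center_mass S + (X - 1) * matrix_mass S)"
    unfolding NB using B_pos by simp
  show "cone_ext (block_vec S (X * Y)) - cone_ext (block_vec S X) - cone_ext (block_vec S Y)
      + cone_ext 1
      = ln (1 + (X - 1) * center_mass S + (Y - 1) * (center_mass S + (X - 1) * matrix_mass S))
        - ln (1 + (X - 1) * center_mass S) - ln (1 + (Y - 1) * center_mass S)"
    using cone_ext_cocycle[OF positive_vec_block_vec[OF X] positive_vec_block_vec[OF Y], of S S]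
      D_pos[OF X] B_pos
    unfolding block_vec_mult NB sum_center_portfolio_block_vec B_def[symmetric]
    by (simp add: ln_mult)
qed

text \<open>Computing \<open>cone_ext (block_vec S 12)\<close> both through \<open>12 = (2 * 2) * 3\<close> and through
  \<open>12 = 2 * (2 * 3)\<close> yields a polynomial identity in \<open>center_mass S\<close> and \<open>matrix_mass S\<close>.\<close>

lemma matrix_mass_cases:
  "(matrix_mass S - center_mass S) * (matrix_mass S - center_mass S ^ 2) = 0"
proof -
  define a where "a = center_mass S"
  define A where "A = matrix_mass S"
  define D where "D X = 1 + (X - 1) * a" for X :: real
  define N where "N X Y = D X + (Y - 1) * (a + (X - 1) * A)" for X Y :: real
  define c where "c X Y = cone_ext (block_vec S (X * Y)) - cone_ext (block_vec S X)
    - cone_ext (block_vec S Y) + cone_ext 1" for X Y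
  have cocycle: "0 < D X" "0 < N X Y" "c X Y = ln (N X Y) - ln (D X) - ln (D Y)"
    if "0 < X" "0 < Y" for X Y
    using block_cocycle[OF that, of S] unfolding N_def D_def a_def A_def c_def by simp_all
  have "c 2 2 + c 4 3 = c 2 3 + c 2 6"
    unfolding c_def by simp
  then have "ln (N 2 2) + ln (N 4 3) + ln (D 6) = ln (N 2 3) + ln (N 2 6) + ln (D 4)"
    by (simp add: cocycle)
  moreover note pos = cocycle(2)[of 2 2] cocycle(2)[of 4 3] cocycle(2)[of 2 3] cocycle(2)[of 2 6]
    cocycle(1)[of 6 1] cocycle(1)[of 4 1]
  ultimately have "ln (N 2 2 * N 4 3 * D 6) = ln (N 2 3 * N 2 6 * D 4)"
    by (simp add: ln_mult)
  then have "N 2 2 * N 4 3 * D 6 = N 2 3 * N 2 6 * D 4"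
    using pos by (subst (asm) ln_inj_iff) simp_all
  then have "-4 * ((A - a) * (A - a ^ 2)) = 0"
    unfolding N_def D_def by (simp add: algebra_simps power2_eq_square)
  then show ?thesis unfolding a_def A_def by simp
qed

lemma block_point_portfolio_mass:
  assumes p: "p \<in> open_simplex" and x: "0 < x" and y: "0 < y"
    and block: "\<And>i. p$i = (if i \<in> S then x else y)"
  shows "0 < y + (x - y) * center_mass S"
    and "(\<Sum>j\<in>S. portfolio p $ j) * (y + (x - y) * center_mass S)
      = center_mass S * y + (x - y) * matrix_mass S"
proof -
  define X where "X = x / y"
  have X: "0 < X" unfolding X_def using x y by simp
  have "coord_sum (block_vec S X) = 1 / y"
    using open_simplex_sum[OF p] y
    unfolding coord_sum_def block_vec_def X_def block by (simp add: sum_if_mem field_simps)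
  then have "normalize_vec (block_vec S X) = p"
    using y by (simp add: normalize_vec_def block_vec_def X_def block vec_eq_iff)
  then have mass: "(\<Sum>j\<in>S. portfolio p $ j) * (1 + (X - 1) * center_mass S)
      = center_mass S + (X - 1) * matrix_mass S"
    using block_portfolio_mass[OF X, of S] by (simp add: cone_portfolio_def)
  have "y + (x - y) * center_mass S = y * (1 + (X - 1) * center_mass S)"
    unfolding X_def using y by (simp add: field_simps)
  then show "0 < y + (x - y) * center_mass S"
    using block_cocycle(1)[OF X X, of S] y by simp
  have "(\<Sum>j\<in>S. portfolio p $ j) * (y + (x - y) * center_mass S)
      = y * ((\<Sum>j\<in>S. portfolio p $ j) * (1 + (X - 1) * center_mass S))"
    unfolding X_def using y by (simp add: field_simps)
  also have "\<dots> = y * (center_mass S + (X - 1) * matrix_mass S)"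
    by (simp only: mass)
  also have "\<dots> = center_mass S * y + (x - y) * matrix_mass S"
    unfolding X_def using y by (simp add: field_simps)
  finally show "(\<Sum>j\<in>S. portfolio p $ j) * (y + (x - y) * center_mass S)
      = center_mass S * y + (x - y) * matrix_mass S" .
qed

lemma dir_deriv_at_block_point:
  assumes p: "p \<in> open_simplex" and x: "0 < x" and y: "0 < y"
    and block: "\<And>i. p$i = (if i \<in> S then x else y)"
    and v: "v \<in> tangent_dirs" "\<And>i. v$i = (if i \<in> S then \<beta> else \<gamma>)"
    and M: "M = (center_mass S * y + (x - y) * matrix_mass S) / (y + (x - y) * center_mass S)"
  shows "dir_deriv \<phi> v p = \<beta> * M / x + \<gamma> * (1 - M) / y"
proof -
  have mass: "(\<Sum>j\<in>S. portfolio p $ j) = M"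
    using block_point_portfolio_mass[OF p x y block] unfolding M by (simp add: eq_divide_eq)
  have rest: "(\<Sum>j\<in>-S. portfolio p $ j) = 1 - M"
    using sum_portfolio[OF p] sum.subset_diff[of S UNIV "\<lambda>j. portfolio p $ j"]
    by (simp add: mass Compl_eq_Diff_UNIV)
  have "dir_deriv \<phi> v p
      = (\<Sum>i\<in>UNIV. if i \<in> S then \<beta> / x * portfolio p $ i else \<gamma> / y * portfolio p $ i)"
    unfolding dir_deriv_eq_portfolio[OF p v(1)] by (rule sum.cong) (simp_all add: v(2) block)
  also have "\<dots> = \<beta> / x * (\<Sum>j\<in>S. portfolio p $ j) + \<gamma> / y * (\<Sum>j\<in>-S. portfolio p $ j)"
    by (simp add: sum.If_cases sum_distrib_left Compl_eq_Diff_UNIV)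
  finally show ?thesis
    unfolding mass rest by simp
qed

lemma dir_deriv_along_block_line:
  assumes S: "S \<noteq> {}" "S \<noteq> UNIV"
    and n: "n = real CARD('n)" and s: "s = real (card S)"
    and v: "v = (\<chi> i. if i \<in> S then n - s else - s)"
    and M: "M = (center_mass S * (1/n - t * s) + t * n * matrix_mass S)
      / ((1/n - t * s) + t * n * center_mass S)"
    and pt: "simplex_center + t *\<^sub>R v \<in> open_simplex"
  shows "dir_deriv \<phi> v (simplex_center + t *\<^sub>R v)
      = (n - s) * M / (1/n + t * (n - s)) + (- s) * (1 - M) / (1/n - t * s)"
proof -
  have v_tangent: "v \<in> tangent_dirs"
    unfolding v tangent_dirs_iff by (simp add: sum_if_mem n s algebra_simps)
  obtain i0 j0 where i0: "i0 \<in> S" and j0: "j0 \<notin> S" using S by blast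
  have line: "(simplex_center + t *\<^sub>R v) $ i = (if i \<in> S then 1/n + t * (n - s) else 1/n - t * s)" for i
    unfolding v simplex_center_def n by (simp add: algebra_simps)
  have "0 < 1/n + t * (n - s)" "0 < 1/n - t * s"
    using open_simplex_pos[OF pt, of i0, unfolded line] open_simplex_pos[OF pt, of j0, unfolded line]
      i0 j0 by simp_all
  moreover have "(1/n + t * (n - s)) - (1/n - t * s) = t * n" by (simp add: algebra_simps)
  ultimately show ?thesis
    by (intro dir_deriv_at_block_point[OF pt _ _ line v_tangent]) (simp_all add: v M)
qed

text \<open>Along the line through the centre that raises the coordinates in \<open>S\<close>, the second
  derivative of \<open>exp \<circ> \<phi>\<close> at the centre is a positive multiple of
  \<open>matrix_mass S - center_mass S\<close>.\<close>

lemma matrix_mass_less_center_mass: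
  assumes S: "S \<noteq> {}" "S \<noteq> UNIV"
  shows "matrix_mass S < center_mass S"
proof -
  define n where "n = real CARD('n)"
  define s where "s = real (card S)"
  define \<alpha> where "\<alpha> = center_mass S"
  define A where "A = matrix_mass S"
  define v :: "real^'n" where "v = (\<chi> i. if i \<in> S then n - s else - s)"
  define M where "M t = (\<alpha> * (1/n - t * s) + t * n * A) / ((1/n - t * s) + t * n * \<alpha>)" for t
  define R where "R t = (n - s) * M t / (1/n + t * (n - s)) + (- s) * (1 - M t) / (1/n - t * s)" for t
  define g where "g t = exp (\<phi> (simplex_center + t *\<^sub>R v))" for t
  note dir_deriv_line = dir_deriv_along_block_line[OF S n_def s_def v_def M_def[unfolded \<alpha>_def A_def]]
  have n: "0 < n" unfolding n_def by simp
  have v_sum: "(\<Sum>i\<in>UNIV. v$i) = 0"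
    unfolding v_def by (simp add: sum_if_mem s_def[symmetric] n_def[symmetric] algebra_simps)
  then have v: "v \<in> tangent_dirs" by (simp add: tangent_dirs_iff)
  have v_nz: "v \<noteq> 0"
  proof -
    obtain i0 where "i0 \<in> S" using S by blast
    moreover have "s < n"
      unfolding s_def n_def using S by (auto intro!: psubset_card_mono)
    ultimately have "v $ i0 \<noteq> 0" unfolding v_def by simp
    then show ?thesis by auto
  qed
  have "deriv (deriv g) 0 = g 0 * (R 0 ^ 2 + (n ^ 4 * (A - \<alpha>) - (n * (n * \<alpha> - s)) ^ 2))"
  proof (rule deriv2_of_logarithmic_derivative)
    show "eventually (\<lambda>t. (g has_real_derivative g t * R t) (at t)) (nhds 0)"
      using eventually_line_in_open_simplex[OF simplex_center_in_open_simplex v]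
    proof (rule eventually_mono)
      fix t assume pt: "simplex_center + t *\<^sub>R v \<in> open_simplex"
      show "(g has_real_derivative g t * R t) (at t)"
        using DERIV_chain2[OF DERIV_exp line_has_derivative[OF simplex_center_in_open_simplex v pt]]
        unfolding g_def R_def dir_deriv_line[OF pt] by simp
    qed
    show "(R has_real_derivative n ^ 4 * (A - \<alpha>) - (n * (n * \<alpha> - s)) ^ 2) (at 0)"
      using block_rate_has_derivative[OF n, of s \<alpha> A] unfolding R_def[abs_def] M_def by simp
  qed
  also have "R 0 = n * (n * \<alpha> - s)"
    unfolding R_def M_def using n by (simp add: field_simps)
  finally have "deriv (deriv g) 0 = g 0 * n ^ 4 * (A - \<alpha>)"
    by simp
  moreover have "deriv (deriv g) 0 < 0"
    using regular simplex_center_in_open_simplex v_nz v_sum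
    unfolding regular_exp_concave_def g_def[abs_def] by blast
  moreover have "0 < g 0" unfolding g_def by simp
  ultimately have "A - \<alpha> < 0"
    using n by (simp add: mult_less_0_iff)
  then show ?thesis unfolding A_def \<alpha>_def by simp
qed

lemma matrix_mass_eq_square:
  assumes S: "S \<noteq> {}"
  shows "matrix_mass S = center_mass S ^ 2"
proof (cases "S = UNIV")
  case True
  then show ?thesis
    by (simp add: matrix_mass_def center_mass_def portfolio_matrix_row_sum sum_center_portfolio)
next
  case False
  then show ?thesis
    using matrix_mass_cases[of S] matrix_mass_less_center_mass[OF S] by auto
qed

lemma portfolio_matrix_eq: "portfolio_matrix j k = center_portfolio $ j * center_portfolio $ k"
proof -
  have diag: "portfolio_matrix i i = (center_portfolio $ i)^2" for i
    using matrix_mass_eq_square[of "{i}"] by (simp add: matrix_mass_def center_mass_def)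
  show ?thesis
  proof (cases "j = k")
    case False
    then have "portfolio_matrix j j + portfolio_matrix j k + (portfolio_matrix k j + portfolio_matrix k k)
        = (center_portfolio $ j + center_portfolio $ k)^2"
      using matrix_mass_eq_square[of "{j, k}"] by (simp add: matrix_mass_def center_mass_def)
    then show ?thesis
      unfolding diag portfolio_matrix_sym[of k j] by (simp add: power2_eq_square algebra_simps)
  qed (simp add: diag power2_eq_square)
qed

lemma cone_portfolio_block_singleton: "cone_portfolio (block_vec {j} 2) = center_portfolio"
proof -
  have "0 < 1 + center_portfolio $ j"
    using ln_sum_cone_portfolio_mult(1)[OF positive_vec_one positive_vec_block_vec, of 2 "{j}"]
    by (simp add: sum_center_portfolio_block_vec center_mass_def)
  moreover have "(1 + center_portfolio $ j) * cone_portfolio (block_vec {j} 2) $ k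
      = (1 + center_portfolio $ j) * center_portfolio $ k" for k
    using portfolio_matrix_eq[of j k] unfolding portfolio_matrix_def by (simp add: algebra_simps)
  ultimately show ?thesis by (simp add: vec_eq_iff)
qed

lemma cone_portfolio_eq_center:
  assumes P: "positive_vec P"
  shows "cone_portfolio P = center_portfolio"
proof -
  have "(1 + cone_portfolio P $ j) * (\<Sum>i\<in>UNIV. center_portfolio $ i * P$i)
      = (\<Sum>i\<in>UNIV. center_portfolio $ i * P$i) * (1 + center_portfolio $ j)" for j
    using cone_portfolio_exchange[OF P positive_vec_block_vec[of 2 "{j}"]]
    by (simp add: sum_mult_block_vec sum_cone_portfolio[OF P] sum_center_portfolio
        cone_portfolio_block_singleton)
  moreover have "0 < (\<Sum>i\<in>UNIV. center_portfolio $ i * P$i)"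
    by (rule ln_sum_cone_portfolio_mult(1)[OF positive_vec_one P])
  ultimately show ?thesis by (simp add: vec_eq_iff)
qed

lemma portfolio_eq_center: "p \<in> open_simplex \<Longrightarrow> portfolio p = center_portfolio"
  using cone_portfolio_eq_center[OF open_simplex_positive_vec]
  by (simp add: cone_portfolio_def normalize_vec_open_simplex)

lemma center_portfolio_in_open_simplex:
  assumes "2 \<le> CARD('n)"
  shows "center_portfolio \<in> open_simplex"
proof (rule open_simplexI)
  fix i :: 'n
  have "{i} \<noteq> UNIV"
  proof
    assume "{i} = UNIV"
    then have "CARD('n) = card {i}" by simp
    then show False using assms by simp
  qed
  then have "(center_portfolio $ i)^2 < center_portfolio $ i"
    using matrix_mass_less_center_mass[of "{i}"] matrix_mass_eq_square[of "{i}"]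
    by (simp add: center_mass_def)
  then show "0 < center_portfolio $ i"
    using zero_le_power2[of "center_portfolio $ i"] by linarith
qed (rule sum_center_portfolio)

end

section \<open>Negative cross-entropies are perturbation invariant\<close>

lemma dir_deriv_log_sum:
  assumes form: "\<And>r. r \<in> open_simplex \<Longrightarrow> \<phi> r = (\<Sum>i\<in>UNIV. \<pi>$i * ln (r$i)) + c"
    and p: "p \<in> open_simplex" and v: "v \<in> tangent_dirs"
  shows "dir_deriv \<phi> v p = (\<Sum>i\<in>UNIV. \<pi>$i * (v$i / p$i))"
proof -
  have "eventually (\<lambda>t. \<phi> (p + t *\<^sub>R v) = (\<Sum>i\<in>UNIV. \<pi>$i * ln (p$i + t * v$i)) + c) (nhds 0)"
    using eventually_line_in_open_simplex[OF p v] by (rule eventually_mono) (simp add: form)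
  then have "dir_deriv \<phi> v p = deriv (\<lambda>t. (\<Sum>i\<in>UNIV. \<pi>$i * ln (p$i + t * v$i)) + c) 0"
    unfolding dir_deriv_def by (rule deriv_cong_ev) simp
  also have "\<dots> = (\<Sum>i\<in>UNIV. \<pi>$i * (v$i / p$i))"
    using DERIV_add[OF log_sum_has_derivative[of p 0 v \<pi>] DERIV_const[of c]] open_simplex_pos[OF p]
    by (intro DERIV_imp_deriv) auto
  finally show ?thesis .
qed

lemma log_div_log_sum:
  assumes pi: "\<pi> \<in> open_simplex"
    and form: "\<And>r. r \<in> open_simplex \<Longrightarrow> \<phi> r = (\<Sum>i\<in>UNIV. \<pi>$i * ln (r$i)) + c"
    and p: "p \<in> open_simplex" and q: "q \<in> open_simplex"
  shows "log_div \<phi> q p = ln (\<Sum>i\<in>UNIV. \<pi>$i * (q$i / p$i)) - (\<Sum>i\<in>UNIV. \<pi>$i * (ln (q$i) - ln (p$i)))"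
proof -
  have "(\<Sum>i\<in>UNIV. \<pi>$i * ((q$i - p$i) / p$i)) = (\<Sum>i\<in>UNIV. \<pi>$i * (q$i / p$i) - \<pi>$i)"
  proof (rule sum.cong)
    fix i
    have "p$i \<noteq> 0" using open_simplex_pos[OF p, of i] by simp
    then show "\<pi>$i * ((q$i - p$i) / p$i) = \<pi>$i * (q$i / p$i) - \<pi>$i"
      by (simp add: diff_divide_distrib algebra_simps)
  qed simp
  then have "1 + dir_deriv \<phi> (q - p) p = (\<Sum>i\<in>UNIV. \<pi>$i * (q$i / p$i))"
    using dir_deriv_log_sum[OF form p tangent_dirs_diff[OF p q]] open_simplex_sum[OF pi]
    by (simp add: sum_subtractf)
  moreover have "\<phi> q - \<phi> p = (\<Sum>i\<in>UNIV. \<pi>$i * (ln (q$i) - ln (p$i)))"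
    using form[OF p] form[OF q] by (simp add: sum_subtractf algebra_simps)
  ultimately show ?thesis unfolding log_div_def by simp
qed

lemma log_div_log_sum_perturb_invariant:
  assumes pi: "\<pi> \<in> open_simplex"
    and form: "\<And>r. r \<in> open_simplex \<Longrightarrow> \<phi> r = (\<Sum>i\<in>UNIV. \<pi>$i * ln (r$i)) + c"
    and p: "p \<in> open_simplex" and q: "q \<in> open_simplex" and h: "h \<in> open_simplex"
  shows "log_div \<phi> (perturb q h) (perturb p h) = log_div \<phi> q p"
proof -
  have pos: "0 < p$i" "0 < q$i" "0 < h$i" for i using open_simplex_pos p q h by auto
  define \<kappa> where "\<kappa> = (\<Sum>j\<in>UNIV. p$j * h$j) / (\<Sum>j\<in>UNIV. q$j * h$j)"
  have \<kappa>: "0 < \<kappa>"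
    unfolding \<kappa>_def by (intro divide_pos_pos sum_pos) (simp_all add: pos)
  have ratio: "perturb q h $ i / perturb p h $ i = \<kappa> * (q$i / p$i)" for i
    unfolding perturb_def \<kappa>_def using pos[of i] by (simp add: field_simps)
  have log_ratio: "ln (perturb q h $ i) - ln (perturb p h $ i) = ln (q$i) - ln (p$i) + ln \<kappa>" for i
  proof -
    have "0 < perturb p h $ i" "0 < perturb q h $ i"
      using perturb_open_simplex[OF p h] perturb_open_simplex[OF q h] by (simp_all add: open_simplex_pos)
    then have "ln (perturb q h $ i) - ln (perturb p h $ i) = ln (\<kappa> * (q$i / p$i))"
      by (subst ratio[symmetric]) (simp add: ln_div)
    also have "\<dots> = ln (q$i) - ln (p$i) + ln \<kappa>"
      using pos[of i] \<kappa> by (simp add: ln_mult ln_div)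
    finally show ?thesis .
  qed
  have sum_pos: "0 < (\<Sum>i\<in>UNIV. \<pi>$i * (q$i / p$i))"
    by (intro sum_pos) (simp_all add: pos open_simplex_pos[OF pi])
  have "log_div \<phi> (perturb q h) (perturb p h)
      = ln (\<Sum>i\<in>UNIV. \<pi>$i * (\<kappa> * (q$i / p$i))) - (\<Sum>i\<in>UNIV. \<pi>$i * (ln (q$i) - ln (p$i) + ln \<kappa>))"
    by (simp only: log_div_log_sum[OF pi form perturb_open_simplex[OF p h] perturb_open_simplex[OF q h]]
        ratio log_ratio)
  also have "\<dots> = ln \<kappa> + ln (\<Sum>i\<in>UNIV. \<pi>$i * (q$i / p$i))
      - ((\<Sum>i\<in>UNIV. \<pi>$i * (ln (q$i) - ln (p$i))) + ln \<kappa>)"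
  proof -
    have "(\<Sum>i\<in>UNIV. \<pi>$i * (\<kappa> * (q$i / p$i))) = \<kappa> * (\<Sum>i\<in>UNIV. \<pi>$i * (q$i / p$i))"
      by (simp add: sum_distrib_left algebra_simps)
    moreover have "(\<Sum>i\<in>UNIV. \<pi>$i * (ln (q$i) - ln (p$i) + ln \<kappa>))
        = (\<Sum>i\<in>UNIV. \<pi>$i * (ln (q$i) - ln (p$i))) + ln \<kappa>"
      using open_simplex_sum[OF pi] by (simp add: distrib_left sum.distrib sum_distrib_right[symmetric])
    ultimately show ?thesis
      using \<kappa> sum_pos by (simp add: ln_mult)
  qed
  also have "\<dots> = log_div \<phi> q p"
    by (simp add: log_div_log_sum[OF pi form p q])
  finally show ?thesis .
qed

theorem mainTheorem14:
  fixes \<phi> :: "real^'n::finite \<Rightarrow> real"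
  assumes "CARD('n) \<ge> 2"
    and "regular_exp_concave \<phi>"
  shows "(\<forall>p\<in>open_simplex. \<forall>q\<in>open_simplex. \<forall>h\<in>open_simplex.
            log_div \<phi> (perturb q h) (perturb p h) = log_div \<phi> q p)
         \<longleftrightarrow> (\<exists>\<pi>\<in>open_simplex. \<exists>c::real. \<forall>p\<in>open_simplex.
            \<phi> p = - cross_entropy \<pi> p + c)"
  (is "?invariant \<longleftrightarrow> ?log_sum")
proof
  assume ?invariant
  then interpret perturbation_invariant \<phi>
    by unfold_locales (use assms(2) in auto)
  let ?c = "\<phi> simplex_center - (\<Sum>i\<in>UNIV. center_portfolio $ i * ln (simplex_center $ i))"
  have "\<phi> p = - cross_entropy center_portfolio p + ?c" if "p \<in> open_simplex" for p
    using phi_minus_log_sum_const[OF portfolio_eq_center that simplex_center_in_open_simplex]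
    unfolding cross_entropy_def by simp
  then show ?log_sum
    using center_portfolio_in_open_simplex[OF assms(1)] by blast
next
  assume ?log_sum
  then obtain \<pi> c where "\<pi> \<in> open_simplex"
    and "\<And>r. r \<in> open_simplex \<Longrightarrow> \<phi> r = (\<Sum>i\<in>UNIV. \<pi>$i * ln (r$i)) + c"
    unfolding cross_entropy_def by auto
  then show ?invariant
    by (blast intro: log_div_log_sum_perturb_invariant)
qed

end
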